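(* In the setting described in the context, let $(\mathcal{M}_i)_{i=1}^n$ be mMVNNs and let $\hat{\mathcal{X}}_i^*(p)=\arg\max_{x\in\mathcal{X}}\{\mathcal{M}_i(x)-\langle p,x\rangle\}$. Then there exists a dense subset $P\subseteq\mathbb{R}^m_{\ge0}$ such that $\mathbb{R}^m_{\ge0}\setminus P$ has $m$-dimensional Lebesgue measure zero and for every $p\in P$: (1) for each $i\in N$ there is a unique maximizer, i.e., $\hat{\mathcal{X}}_i^*(p)=\{\hat x_i^*(p)\}$; (2) the map $p\mapsto W(p,(\mathcal{M}_i)_{i=1}^n)$ is differentiable at $p$ with gradient $\nabla_pW(p,(\mathcal{M}_i)_{i=1}^n)=c-\sum_{i\in N}\hat x_i^*(p)$, which is also the unique sub-gradient, i.e., $\partial_pW(p,(\mathcal{M}_i)_{i=1}^n)=\{c-\sum_{i\in N}\hat x_i^*(p)\}$; (3) each unique maximizer $\hat x_i^*(\cdot)$ is constant on a neighbourhood of $p$, and thus $\partial_p\hat x_i^*(p)=0$.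
   Context: Items $M=\{1,\ldots,m\}$ have capacities $c\in\mathbb{N}^m$; $\mathcal{X}=\{0,\ldots,c_1\}\times\cdots\times\{0,\ldots,c_m\}$; bidders $N=\{1,\ldots,n\}$; $\mathcal{F}=\{a\in\mathcal{X}^n:\sum_{i}a_{ij}\le c_j\ \forall j\}$. For $p\in\mathbb{R}^m_{\ge0}$: $U(p,\mathcal{M}_i)=\max_{x\in\mathcal{X}}\{\mathcal{M}_i(x)-\langle p,x\rangle\}$, $R(p)=\max_{a\in\mathcal{F}}\sum_i\langle p,a_i\rangle=\sum_j c_jp_j$, $W(p,(\mathcal{M}_i)_{i=1}^n)=R(p)+\sum_{i\in N}U(p,\mathcal{M}_i)$. Sub-gradients are understood for the convex function $p\mapsto\langle c,p\rangle+\sum_i U(p,\mathcal{M}_i)$ (this formula defines it on all of $\mathbb{R}^m$), evaluated at $p\in\mathbb{R}^m_{\ge0}$. An mMVNN is a map $\mathcal{M}:\mathcal{X}\to\mathbb{R}_{\ge0}$ of the form $\mathcal{M}(x)=W^{K}\varphi_{0,t^{K-1}}(\cdots\varphi_{0,t^1}(W^1(Dx)+b^1)\cdots)$, with $\varphi_{0,t}(z)=\min(t,\max(0,z))$ componentwise, cutoffs $t^k>0$, non-negative weight matrices $W^k\in\mathbb{R}^{d^k\times d^{k-1}}$ ($d^0=m$, $d^K=1$), non-positive bias vectors $b^k$, and $D=\mathrm{diag}(1/c_1,\ldots,1/c_m)$. *)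

theory Defs
  imports "HOL-Analysis.Analysis"
begin

text \<open>Items are indexed by a finite type 'm (so m = CARD('m)); prices and bundles
  live in real^'m. Capacities c :: 'm => nat. Bidders are 0,...,n-1.\<close>

definition bundles :: "('m::finite \<Rightarrow> nat) \<Rightarrow> (real^'m) set" where
  "bundles c = {x. \<forall>j. x$j \<in> \<int> \<and> 0 \<le> x$j \<and> x$j \<le> real (c j)}"

definition capvec :: "('m::finite \<Rightarrow> nat) \<Rightarrow> real^'m" where
  "capvec c = (\<chi> j. real (c j))"

definition nonneg_orthant :: "(real^'m::finite) set" where
  "nonneg_orthant = {p. \<forall>j. 0 \<le> p$j}"

definition indirect_util :: "('m::finite \<Rightarrow> nat) \<Rightarrow> (real^'m \<Rightarrow> real) \<Rightarrow> real^'m \<Rightarrow> real" where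
  "indirect_util c M p = Max ((\<lambda>x. M x - inner p x) ` bundles c)"

definition demand :: "('m::finite \<Rightarrow> nat) \<Rightarrow> (real^'m \<Rightarrow> real) \<Rightarrow> real^'m \<Rightarrow> (real^'m) set" where
  "demand c M p = {x \<in> bundles c. \<forall>y \<in> bundles c. M y - inner p y \<le> M x - inner p x}"

text \<open>Revenue R(p) = max over feasible allocations = sum_j c_j p_j.\<close>
definition revenue :: "('m::finite \<Rightarrow> nat) \<Rightarrow> real^'m \<Rightarrow> real" where
  "revenue c p = inner (capvec c) p"

definition Wfun :: "('m::finite \<Rightarrow> nat) \<Rightarrow> nat \<Rightarrow> (nat \<Rightarrow> real^'m \<Rightarrow> real) \<Rightarrow> real^'m \<Rightarrow> real" where
  "Wfun c n M p = revenue c p + (\<Sum>i<n. indirect_util c (M i) p)"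

definition subgradients :: "(real^'m::finite \<Rightarrow> real) \<Rightarrow> real^'m \<Rightarrow> (real^'m) set" where
  "subgradients f p = {g. \<forall>q. f p + inner g (q - p) \<le> f q}"

definition phi_cut :: "real \<Rightarrow> real \<Rightarrow> real" where
  "phi_cut t z = min t (max 0 z)"

text \<open>Pre-activations of an mMVNN with K layers: mvnn_pre ... k is z^(k+1).
  z^1 = W^1 (D x) + b^1,  z^(k+1) = W^(k+1) phi_(t^k)(z^k) + b^(k+1); the last
  layer K has no bias (b^K treated as 0). W1 i j is the (i,j) entry of W^1,
  W k i l the (i,l) entry of W^k for k >= 2, b k i the i-th entry of b^k,
  t k the cutoff t^k, d k = d^k.\<close>
primrec mvnn_pre :: "nat \<Rightarrow> (nat \<Rightarrow> nat) \<Rightarrow> (nat \<Rightarrow> 'm::finite \<Rightarrow> real)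
    \<Rightarrow> (nat \<Rightarrow> nat \<Rightarrow> nat \<Rightarrow> real) \<Rightarrow> (nat \<Rightarrow> nat \<Rightarrow> real) \<Rightarrow> (nat \<Rightarrow> real)
    \<Rightarrow> ('m \<Rightarrow> nat) \<Rightarrow> real^'m \<Rightarrow> nat \<Rightarrow> nat \<Rightarrow> real" where
  "mvnn_pre K d W1 W b t c x 0 i =
     (\<Sum>j\<in>UNIV. W1 i j * (x$j / real (c j))) + (if 1 < K then b 1 i else 0)"
| "mvnn_pre K d W1 W b t c x (Suc k) i =
     (\<Sum>l<d (Suc k). W (k+2) i l * phi_cut (t (Suc k)) (mvnn_pre K d W1 W b t c x k l))
     + (if k + 2 < K then b (k+2) i else 0)"

definition mMVNN :: "('m::finite \<Rightarrow> nat) \<Rightarrow> (real^'m \<Rightarrow> real) \<Rightarrow> bool" where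
  "mMVNN c M \<longleftrightarrow> (\<exists>K d W1 W b t. 1 \<le> K \<and> d 0 = CARD('m) \<and> d K = 1 \<and>
     (\<forall>i j. 0 \<le> W1 i j) \<and> (\<forall>k i l. 0 \<le> W k i l) \<and> (\<forall>k i. b k i \<le> 0) \<and>
     (\<forall>k. 0 < t k) \<and>
     (\<forall>x \<in> bundles c. M x = mvnn_pre K d W1 W b t c x (K - 1) 0))"

end

theory Submission
  imports Defs
begin

text \<open>A bidder's utility is the maximum of the finitely many affine functions
  \<open>p \<mapsto> M x - \<langle>p, x\<rangle>\<close>, one per bundle \<open>x\<close>.  Off the finitely many hyperplanes
  \<open>\<langle>x - y, p\<rangle> = M x - M y\<close> with \<open>x \<noteq> y\<close>, every bidder has a strict favourite bundle, and
  strict preferences persist on a ball around \<open>p\<close>.  There the demands are constant singletons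
  \<open>{x\<^sub>i}\<close>, and \<open>W\<close> coincides with the affine function
  \<open>q \<mapsto> \<langle>c - \<Sum>\<^sub>i x\<^sub>i, q\<rangle> + \<Sum>\<^sub>i M\<^sub>i x\<^sub>i\<close>, which minorizes \<open>W\<close> everywhere; this gives both
  the gradient and the unique sub-gradient.  The union of the hyperplanes is a closed null set,
  and removing a null set from the convex orthant, whose interior is non-empty, leaves it dense.\<close>

lemma finite_bundles: "finite (bundles c)"
proof -
  have "bundles c \<subseteq> vec_lambda ` (\<Pi>\<^sub>E j \<in> UNIV. {x \<in> \<int>. 0 \<le> x \<and> x \<le> real (c j)})"
  proof
    fix x assume "x \<in> bundles c"
    then have "vec_nth x \<in> (\<Pi>\<^sub>E j \<in> UNIV. {x \<in> \<int>. 0 \<le> x \<and> x \<le> real (c j)})"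
      unfolding bundles_def by (simp add: PiE_UNIV_domain)
    then show "x \<in> vec_lambda ` (\<Pi>\<^sub>E j \<in> UNIV. {x \<in> \<int>. 0 \<le> x \<and> x \<le> real (c j)})"
      by (rule image_eqI[rotated]) (simp add: vec_nth_inverse)
  qed
  then show ?thesis
    by (rule finite_subset) (simp add: finite_PiE finite_int_segment)
qed

lemma zero_in_bundles: "0 \<in> bundles c"
  unfolding bundles_def by auto

lemma indirect_util_ge: "y \<in> bundles c \<Longrightarrow> M y - inner p y \<le> indirect_util c M p"
  unfolding indirect_util_def by (rule Max_ge) (auto simp: finite_bundles)

lemma indirect_util_eq: "x \<in> demand c M p \<Longrightarrow> indirect_util c M p = M x - inner p x"
  unfolding indirect_util_def demand_def by (rule Max_eqI) (auto simp: finite_bundles)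

lemma demand_nonempty: "demand c M p \<noteq> {}"
proof -
  let ?S = "(\<lambda>x. M x - inner p x) ` bundles c"
  have "Max ?S \<in> ?S"
    using zero_in_bundles by (intro Max_in) (auto simp: finite_bundles)
  then obtain x where "x \<in> bundles c" "indirect_util c M p = M x - inner p x"
    unfolding indirect_util_def by auto
  then have "x \<in> demand c M p"
    using indirect_util_ge[of _ c M p] unfolding demand_def by auto
  then show ?thesis by auto
qed

lemma demand_eq_singleton_iff:
  "demand c M p = {x} \<longleftrightarrow>
     x \<in> bundles c \<and> (\<forall>y \<in> bundles c - {x}. M y - inner p y < M x - inner p x)"
proof
  assume dem: "demand c M p = {x}"
  then have x: "x \<in> demand c M p" by simp
  have "M y - inner p y < M x - inner p x" if "y \<in> bundles c" "y \<noteq> x" for y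
  proof -
    have "y \<notin> demand c M p" using dem that by auto
    then have "\<exists>z \<in> bundles c. M y - inner p y < M z - inner p z"
      using that unfolding demand_def by (auto simp: not_le)
    then obtain z where "z \<in> bundles c" "M y - inner p y < M z - inner p z" ..
    then show ?thesis using x unfolding demand_def by force
  qed
  then show "x \<in> bundles c \<and> (\<forall>y \<in> bundles c - {x}. M y - inner p y < M x - inner p x)"
    using x unfolding demand_def by auto
next
  assume strict: "x \<in> bundles c \<and> (\<forall>y \<in> bundles c - {x}. M y - inner p y < M x - inner p x)"
  have "y = x" if "y \<in> demand c M p" for y
  proof (rule ccontr)
    assume "y \<noteq> x"
    then have "M y - inner p y < M x - inner p x" using strict that unfolding demand_def by auto
    moreover have "M x - inner p x \<le> M y - inner p y" using strict that unfolding demand_def by auto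
    ultimately show False by simp
  qed
  moreover have "x \<in> demand c M p"
    using strict unfolding demand_def by (auto intro: less_imp_le)
  ultimately show "demand c M p = {x}" by blast
qed

definition indifference_prices :: "('m::finite \<Rightarrow> nat) \<Rightarrow> (real^'m \<Rightarrow> real) \<Rightarrow> (real^'m) set" where
  "indifference_prices c M =
     (\<Union>(x, y) \<in> {(x, y) \<in> bundles c \<times> bundles c. x \<noteq> y}. {p. inner (x - y) p = M x - M y})"

lemma finite_distinct_bundle_pairs: "finite {(x, y) \<in> bundles c \<times> bundles c. x \<noteq> y}"
  by (rule finite_subset[of _ "bundles c \<times> bundles c"]) (auto simp: finite_bundles)

lemma indifference_pricesI:
  assumes "x \<in> bundles c" "y \<in> bundles c" "x \<noteq> y" "M x - inner p x = M y - inner p y"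
  shows "p \<in> indifference_prices c M"
proof -
  have "inner (x - y) p = inner p x - inner p y" by (metis inner_commute inner_diff_right)
  also have "\<dots> = M x - M y" using assms(4) by simp
  finally have "p \<in> {q. inner (x - y) q = M x - M y}" by simp
  moreover have "(x, y) \<in> {(x, y) \<in> bundles c \<times> bundles c. x \<noteq> y}" using assms(1-3) by simp
  ultimately show ?thesis unfolding indifference_prices_def by blast
qed

lemma closed_indifference_prices: "closed (indifference_prices c M)"
  unfolding indifference_prices_def using finite_distinct_bundle_pairs
  by (intro closed_Union) (auto simp: closed_hyperplane)

lemma negligible_indifference_prices: "negligible (indifference_prices c M)"
  unfolding indifference_prices_def using finite_distinct_bundle_pairs
  by (intro negligible_Union) (auto simp: negligible_hyperplane)

lemma demand_singleton_if_not_indifferent: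
  assumes "p \<notin> indifference_prices c M"
  shows "\<exists>x. demand c M p = {x}"
proof -
  obtain x where x: "x \<in> demand c M p" using demand_nonempty by blast
  have "y = x" if "y \<in> demand c M p" for y
  proof (rule ccontr)
    assume "y \<noteq> x"
    moreover have "x \<in> bundles c" "y \<in> bundles c"
      using x that unfolding demand_def by simp_all
    moreover have "M x - inner p x = M y - inner p y"
      using x that unfolding demand_def by (auto intro: antisym)
    ultimately have "p \<in> indifference_prices c M" by (metis indifference_pricesI)
    then show False using assms by simp
  qed
  then show ?thesis using x by blast
qed

lemma eventually_demand_eq_singleton:
  assumes "demand c M p = {x}"
  shows "eventually (\<lambda>q. demand c M q = {x}) (nhds p)"
proof -
  let ?U = "\<Inter>y \<in> bundles c - {x}. {q. M y - inner q y < M x - inner q x}"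
  have "open ?U"
    using finite_bundles by (intro open_INT ballI open_Collect_less) (auto intro!: continuous_intros)
  moreover have "p \<in> ?U" using assms by (simp add: demand_eq_singleton_iff)
  ultimately have "eventually (\<lambda>q. q \<in> ?U) (nhds p)" by (rule eventually_nhds_in_open)
  moreover have "x \<in> bundles c" using assms by (simp add: demand_eq_singleton_iff)
  ultimately show ?thesis
    by (elim eventually_mono) (simp add: demand_eq_singleton_iff)
qed

lemma demands_locally_constant:
  fixes n :: nat
  assumes "\<And>i. i < n \<Longrightarrow> p \<notin> indifference_prices c (M i)"
  obtains xhat e where "0 < e" "\<forall>i<n. \<forall>q \<in> ball p e. demand c (M i) q = {xhat i}"
proof -
  have "\<forall>i \<in> {..<n}. \<exists>x. demand c (M i) p = {x}"
    using assms by (simp add: demand_singleton_if_not_indifferent)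
  from bchoice[OF this] obtain xhat where "\<forall>i \<in> {..<n}. demand c (M i) p = {xhat i}" ..
  then have "\<forall>i \<in> {..<n}. eventually (\<lambda>q. demand c (M i) q = {xhat i}) (nhds p)"
    by (simp add: eventually_demand_eq_singleton)
  then have "eventually (\<lambda>q. \<forall>i \<in> {..<n}. demand c (M i) q = {xhat i}) (nhds p)"
    by (rule eventually_ball_finite[OF finite_lessThan])
  then obtain e where "0 < e" "\<forall>q. dist q p < e \<longrightarrow> (\<forall>i \<in> {..<n}. demand c (M i) q = {xhat i})"
    unfolding eventually_nhds_metric by blast
  then show ?thesis by (intro that[of e xhat]) (simp_all add: dist_commute)
qed

lemma negligible_Diff_dense_in_open:
  assumes "open U" "negligible N"
  shows "U \<subseteq> closure (U - N)"
proof
  fix p assume "p \<in> U"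
  show "p \<in> closure (U - N)" unfolding closure_approachable
  proof (intro allI impI)
    fix e :: real assume "0 < e"
    then have "p \<in> ball p e \<inter> U" using \<open>p \<in> U\<close> by simp
    then have "\<not> negligible (ball p e \<inter> U)"
      using \<open>open U\<close> open_not_negligible[of "ball p e \<inter> U"] by blast
    then obtain q where "q \<in> ball p e \<inter> U" "q \<notin> N"
      using assms(2) negligible_subset by blast
    then show "\<exists>q \<in> U - N. dist q p < e" by (auto simp: dist_commute)
  qed
qed

lemma negligible_Diff_dense_in_convex:
  fixes S :: "'a::euclidean_space set"
  assumes "convex S" "interior S \<noteq> {}" "negligible N"
  shows "S \<subseteq> closure (S - N)"
proof -
  have "S \<subseteq> closure (interior S)"
    using assms convex_closure_interior closure_subset by blast
  also have "\<dots> \<subseteq> closure (interior S - N)"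
    using negligible_Diff_dense_in_open[OF open_interior assms(3)] closure_minimal by blast
  also have "\<dots> \<subseteq> closure (S - N)"
    using interior_subset by (intro closure_mono) blast
  finally show ?thesis .
qed

lemma convex_nonneg_orthant: "convex nonneg_orthant"
  unfolding convex_def nonneg_orthant_def by auto

lemma interior_nonneg_orthant_nonempty: "interior (nonneg_orthant :: (real^'m::finite) set) \<noteq> {}"
proof -
  let ?U = "\<Inter>j. {p :: real^'m. 0 < p$j}"
  have "open ?U" by (intro open_INT) (auto intro: open_halfspace_component_gt_cart)
  moreover have "?U \<subseteq> nonneg_orthant" unfolding nonneg_orthant_def by (auto intro: less_imp_le)
  moreover have "(\<chi> j. 1) \<in> ?U" by simp
  ultimately show ?thesis using interior_maximal by blast
qed

lemma closed_nonneg_orthant: "closed (nonneg_orthant :: (real^'m::finite) set)"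
proof -
  have "nonneg_orthant = (\<Inter>j. {p :: real^'m. 0 \<le> p$j})" unfolding nonneg_orthant_def by auto
  then show ?thesis using closed_halfspace_component_ge_cart by (metis closed_INT)
qed

lemma affine_eq_revenue_plus_utilities:
  "inner (capvec c - (\<Sum>i<n. x i)) q + (\<Sum>i<n. M i (x i)) =
     revenue c q + (\<Sum>i<n. M i (x i) - inner q (x i))"
  unfolding revenue_def
  by (simp add: inner_diff_right inner_sum_right sum_subtractf inner_commute)

lemma Wfun_ge_affine:
  assumes "\<forall>i<n. x i \<in> bundles c"
  shows "inner (capvec c - (\<Sum>i<n. x i)) q + (\<Sum>i<n. M i (x i)) \<le> Wfun c n M q"
  unfolding affine_eq_revenue_plus_utilities Wfun_def
  using assms by (intro add_left_mono sum_mono) (auto intro: indirect_util_ge)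

lemma Wfun_eq_affine:
  assumes "\<forall>i<n. x i \<in> demand c (M i) q"
  shows "Wfun c n M q = inner (capvec c - (\<Sum>i<n. x i)) q + (\<Sum>i<n. M i (x i))"
  unfolding affine_eq_revenue_plus_utilities Wfun_def
  using assms by (intro arg_cong2[where f="(+)"] refl sum.cong) (auto simp: indirect_util_eq)

lemma subgradients_locally_affine_minorant:
  fixes f :: "real^'m::finite \<Rightarrow> real"
  assumes "0 < e" and minorant: "\<And>q. inner g q + C \<le> f q"
    and affine: "\<And>q. q \<in> ball p e \<Longrightarrow> f q = inner g q + C"
  shows "subgradients f p = {g}"
proof
  have "f p = inner g p + C" using affine \<open>0 < e\<close> by simp
  then show "{g} \<subseteq> subgradients f p"
    unfolding subgradients_def using minorant by (auto simp: inner_diff_right add.commute)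
next
  show "subgradients f p \<subseteq> {g}"
  proof
    fix g' assume "g' \<in> subgradients f p"
    then have sub: "f p + inner g' (q - p) \<le> f q" for q
      unfolding subgradients_def by auto
    txt \<open>Test the sub-gradient inequality at \<open>p + t (g' - g)\<close> inside the ball, where \<open>f\<close> is
      affine with slope \<open>g\<close>: it yields \<open>t \<parallel>g' - g\<parallel>\<^sup>2 \<le> 0\<close>.\<close>
    define a where "a = norm (g' - g) + 1"
    have "0 < a" unfolding a_def by (simp add: add_nonneg_pos)
    define t where "t = e / (2 * a)"
    have "0 < t" using \<open>0 < e\<close> \<open>0 < a\<close> unfolding t_def by simp
    have "t * norm (g' - g) < e"
    proof -
      have "t * norm (g' - g) \<le> t * a" using \<open>0 < t\<close> unfolding a_def by simp
      also have "\<dots> = e / 2" unfolding t_def using \<open>0 < a\<close> by simp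
      finally show ?thesis using \<open>0 < e\<close> by simp
    qed
    then have "p + t *\<^sub>R (g' - g) \<in> ball p e" using \<open>0 < t\<close> by (simp add: dist_norm)
    then have "inner g' (t *\<^sub>R (g' - g)) \<le> inner g (t *\<^sub>R (g' - g))"
      using sub[of "p + t *\<^sub>R (g' - g)"] affine \<open>0 < e\<close> by (simp add: inner_add_right)
    then have "t * inner (g' - g) (g' - g) \<le> 0" by (simp add: inner_diff_left algebra_simps)
    then have "inner (g' - g) (g' - g) \<le> 0" using \<open>0 < t\<close> by (simp add: mult_le_0_iff)
    then have "g' - g = 0" by (meson inner_eq_zero_iff inner_ge_zero order_antisym)
    then show "g' \<in> {g}" by simp
  qed
qed

context
  fixes c :: "'m::finite \<Rightarrow> nat" and n :: nat and M :: "nat \<Rightarrow> real^'m \<Rightarrow> real"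
    and xhat :: "nat \<Rightarrow> real^'m" and p :: "real^'m" and e :: real
  assumes e_pos: "0 < e"
    and demands: "\<forall>i<n. \<forall>q \<in> ball p e. demand c (M i) q = {xhat i}"
begin

lemma Wfun_locally_affine:
  "q \<in> ball p e \<Longrightarrow> Wfun c n M q = inner (capvec c - (\<Sum>i<n. xhat i)) q + (\<Sum>i<n. M i (xhat i))"
  using demands by (intro Wfun_eq_affine) auto

lemma has_derivative_Wfun:
  "(Wfun c n M has_derivative (\<lambda>h. inner (capvec c - (\<Sum>i<n. xhat i)) h)) (at p)"
proof (rule has_derivative_transform_within_open[where s="ball p e"])
  show "((\<lambda>q. inner (capvec c - (\<Sum>i<n. xhat i)) q + (\<Sum>i<n. M i (xhat i))) has_derivative
          (\<lambda>h. inner (capvec c - (\<Sum>i<n. xhat i)) h)) (at p)"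
    by (auto intro!: derivative_eq_intros)
qed (use e_pos Wfun_locally_affine in auto)

lemma subgradients_Wfun: "subgradients (Wfun c n M) p = {capvec c - (\<Sum>i<n. xhat i)}"
proof (rule subgradients_locally_affine_minorant[OF e_pos _ Wfun_locally_affine])
  have "xhat i \<in> bundles c" if "i < n" for i
  proof -
    have "xhat i \<in> demand c (M i) p" using demands e_pos that by simp
    then show ?thesis unfolding demand_def by simp
  qed
  then show "inner (capvec c - (\<Sum>i<n. xhat i)) q + (\<Sum>i<n. M i (xhat i)) \<le> Wfun c n M q" for q
    by (simp add: Wfun_ge_affine)
qed

lemma has_derivative_unique_demand:
  "i < n \<Longrightarrow> ((\<lambda>q. THE x. demand c (M i) q = {x}) has_derivative (\<lambda>_. 0)) (at p)"
proof (rule has_derivative_transform_within_open[where s="ball p e"])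
  show "((\<lambda>q. xhat i) has_derivative (\<lambda>_. 0)) (at p)" by simp
qed (use demands e_pos in auto)

end

theorem lemma6:
  fixes c :: "'m::finite \<Rightarrow> nat" and n :: nat and M :: "nat \<Rightarrow> real^'m \<Rightarrow> real"
  assumes "\<forall>j. 0 < c j"
    and "\<forall>i<n. mMVNN c (M i)"
  shows "\<exists>P \<subseteq> nonneg_orthant. nonneg_orthant \<subseteq> closure P \<and>
           nonneg_orthant - P \<in> null_sets lborel \<and>
           (\<forall>p\<in>P. \<exists>xhat :: nat \<Rightarrow> real^'m.
              (\<forall>i<n. demand c (M i) p = {xhat i}) \<and>
              (Wfun c n M has_derivative
                 (\<lambda>h. inner (capvec c - (\<Sum>i<n. xhat i)) h)) (at p) \<and>
              subgradients (Wfun c n M) p = {capvec c - (\<Sum>i<n. xhat i)} \<and>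
              (\<forall>i<n. (\<exists>e>0. \<forall>q\<in>ball p e. demand c (M i) q = {xhat i}) \<and>
                 ((\<lambda>q. THE x. demand c (M i) q = {x}) has_derivative (\<lambda>_. 0)) (at p)))"
proof -
  define H where "H = (\<Union>i<n. indifference_prices c (M i))"
  have "closed H" unfolding H_def by (simp add: closed_UN closed_indifference_prices)
  have "negligible H"
    unfolding H_def by (intro negligible_Union finite_imageI finite_lessThan) (auto simp: negligible_indifference_prices)
  then have "H \<in> null_sets lborel"
    using \<open>closed H\<close> by (simp add: negligible_iff_null_sets null_sets_completion_iff borel_closed)
  then have "nonneg_orthant \<inter> H \<in> null_sets lborel"
    by (rule null_set_Int1) (simp add: borel_closed closed_nonneg_orthant)
  then have "nonneg_orthant - (nonneg_orthant - H) \<in> null_sets lborel"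
    by (simp add: Diff_Diff_Int)
  moreover have "nonneg_orthant \<subseteq> closure (nonneg_orthant - H)"
    using convex_nonneg_orthant interior_nonneg_orthant_nonempty \<open>negligible H\<close>
    by (rule negligible_Diff_dense_in_convex)
  moreover have "\<exists>xhat. (\<forall>i<n. demand c (M i) p = {xhat i}) \<and>
      (Wfun c n M has_derivative (\<lambda>h. inner (capvec c - (\<Sum>i<n. xhat i)) h)) (at p) \<and>
      subgradients (Wfun c n M) p = {capvec c - (\<Sum>i<n. xhat i)} \<and>
      (\<forall>i<n. (\<exists>e>0. \<forall>q\<in>ball p e. demand c (M i) q = {xhat i}) \<and>
         ((\<lambda>q. THE x. demand c (M i) q = {x}) has_derivative (\<lambda>_. 0)) (at p))"
    if p: "p \<in> nonneg_orthant - H" for p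
  proof -
    have "p \<notin> indifference_prices c (M i)" if "i < n" for i
      using p that by (simp add: H_def)
    then obtain xhat e where e: "0 < e" "\<forall>i<n. \<forall>q \<in> ball p e. demand c (M i) q = {xhat i}"
      by (rule demands_locally_constant)
    then show ?thesis
      using has_derivative_Wfun[OF e] subgradients_Wfun[OF e] has_derivative_unique_demand[OF e]
      by (intro exI[of _ xhat]) auto
  qed
  ultimately show ?thesis by (intro exI[of _ "nonneg_orthant - H"]) blast
qed

end
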